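(* For any instance of CAP with $m$ items, let $k$ be the maximum utilitarian social welfare $\sum_{i\in N}v_i(A_i)$ over all contiguous allocations $\mathbf A$. Then $k\ge\sqrt m$.
   Context: An instance of CAP consists of agents $N=[n]$ and indivisible items $M=\{g_1,\dots,g_m\}$ arranged on a path in index order; each agent $i$ has an additive valuation $v_i:2^M\to\mathbb{Z}_{\ge0}$ (nonnegative integer values), and every item $g$ satisfies $v_i(\{g\})\ge1$ for some agent $i$. An allocation $(A_1,\dots,A_n)$ is a partition of $M$ into possibly empty bundles; it is contiguous if each nonempty $A_i$ is a set of consecutive items $\{g_k,\dots,g_\ell\}$ (no order on agents is imposed). *)

theory Defs
  imports Complex_Main
begin

text \<open>Agents are 0..<n, items g_1..g_m are 0..<m in path order.
  A valuation profile v i g is the (nonnegative integer) value of agent i for item g;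
  bundle values are additive.\<close>

definition bundle_value :: "(nat \<Rightarrow> nat \<Rightarrow> nat) \<Rightarrow> nat \<Rightarrow> nat set \<Rightarrow> nat" where
  "bundle_value v i S = (\<Sum>g\<in>S. v i g)"

definition is_allocation :: "nat \<Rightarrow> nat \<Rightarrow> (nat \<Rightarrow> nat set) \<Rightarrow> bool" where
  "is_allocation n m A \<longleftrightarrow>
     (\<forall>i<n. A i \<subseteq> {..<m}) \<and>
     (\<forall>i<n. \<forall>j<n. i \<noteq> j \<longrightarrow> A i \<inter> A j = {}) \<and>
     (\<Union>i<n. A i) = {..<m}"

definition is_contiguous_allocation :: "nat \<Rightarrow> nat \<Rightarrow> (nat \<Rightarrow> nat set) \<Rightarrow> bool" where
  "is_contiguous_allocation n m A \<longleftrightarrow>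
     is_allocation n m A \<and>
     (\<forall>i<n. A i = {} \<or> (\<exists>k l. k \<le> l \<and> A i = {k..l}))"

definition utilitarian_welfare :: "nat \<Rightarrow> (nat \<Rightarrow> nat \<Rightarrow> nat) \<Rightarrow> (nat \<Rightarrow> nat set) \<Rightarrow> nat" where
  "utilitarian_welfare n v A = (\<Sum>i<n. bundle_value v i (A i))"

definition max_contiguous_welfare :: "nat \<Rightarrow> nat \<Rightarrow> (nat \<Rightarrow> nat \<Rightarrow> nat) \<Rightarrow> nat" where
  "max_contiguous_welfare n m v =
     Max {utilitarian_welfare n v A | A. is_contiguous_allocation n m A}"

end

theory Submission
  imports Defs "HOL-Library.FuncSet"
begin

text \<open>Pick for every item g an agent f g who values it. If d agents occur among the f g,
  sweeping the path from left to right and opening a new bundle exactly when a new agent of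
  this list appears gives a contiguous allocation in which every one of these d agents gets an
  item she likes, so k \<ge> d. By pigeonhole some agent i is chosen for at least m / d items,
  and giving the whole path to i yields k \<ge> m / d. Hence k * k \<ge> m.\<close>

lemma bundle_value_mono:
  "finite T \<Longrightarrow> S \<subseteq> T \<Longrightarrow> bundle_value v i S \<le> bundle_value v i T"
  unfolding bundle_value_def by (rule sum_mono2) auto

lemma card_le_bundle_value:
  assumes "finite S" "\<forall>g\<in>S. 1 \<le> v i g"
  shows "card S \<le> bundle_value v i S"
  unfolding bundle_value_def card_eq_sum using assms by (intro sum_mono) auto

lemma utilitarian_welfare_fun_upd:
  assumes "i < n"
  shows "utilitarian_welfare n v (A(i := B))
           + bundle_value v i (A i) = utilitarian_welfare n v A + bundle_value v i B"
proof -
  have "utilitarian_welfare n v (A(i := B)) = bundle_value v i B + (\<Sum>j\<in>{..<n}-{i}. bundle_value v j (A j))"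
    unfolding utilitarian_welfare_def using assms
    by (subst sum.remove[of _ i]) (auto intro!: sum.cong)
  moreover have "utilitarian_welfare n v A = bundle_value v i (A i) + (\<Sum>j\<in>{..<n}-{i}. bundle_value v j (A j))"
    unfolding utilitarian_welfare_def using assms by (subst sum.remove[of _ i]) auto
  ultimately show ?thesis by simp
qed

lemma utilitarian_welfare_fun_upd_insert:
  assumes "i < n" "g \<notin> A i" "finite (A i)"
  shows "utilitarian_welfare n v (A(i := insert g (A i))) = utilitarian_welfare n v A + v i g"
  using utilitarian_welfare_fun_upd[OF assms(1), of v A "insert g (A i)"] assms(2,3)
  by (simp add: bundle_value_def)

lemma contiguous_allocation_bundles:
  assumes "is_contiguous_allocation n m A" "i < n"
  shows "A i \<subseteq> {..<m}" "A i = {} \<or> (\<exists>k l. k \<le> l \<and> A i = {k..l})"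
  using assms unfolding is_contiguous_allocation_def is_allocation_def by auto

lemma contiguous_allocation_insert_next:
  assumes A: "is_contiguous_allocation n m A" and "i < n" "k \<le> m" "insert m (A i) = {k..m}"
  shows "is_contiguous_allocation n (Suc m) (A(i := insert m (A i)))"
proof -
  let ?A' = "A(i := insert m (A i))"
  have sub: "\<forall>j<n. A j \<subseteq> {..<m}" and dis: "\<forall>j<n. \<forall>l<n. j \<noteq> l \<longrightarrow> A j \<inter> A l = {}"
    and un: "(\<Union>j<n. A j) = {..<m}" and c: "\<forall>j<n. A j = {} \<or> (\<exists>k l. k \<le> l \<and> A j = {k..l})"
    using A unfolding is_contiguous_allocation_def is_allocation_def by auto
  have "(\<Union>j<n. ?A' j) = insert m (\<Union>j<n. A j)"
    using \<open>i < n\<close> by (auto split: if_splits)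
  also have "\<dots> = {..<Suc m}" using un by auto
  finally have union: "(\<Union>j<n. ?A' j) = {..<Suc m}" .
  have subset: "?A' j \<subseteq> {..<Suc m}" if "j < n" for j
    using sub that by (auto simp: subset_iff less_Suc_eq)
  have disjoint: "?A' j \<inter> ?A' l = {}" if "j < n" "l < n" "j \<noteq> l" for j l
  proof -
    have "m \<notin> A j" "m \<notin> A l" "A j \<inter> A l = {}" using sub dis that by auto
    with \<open>j \<noteq> l\<close> show ?thesis by (cases "j = i"; cases "l = i") auto
  qed
  have interval: "?A' j = {} \<or> (\<exists>k l. k \<le> l \<and> ?A' j = {k..l})" if "j < n" for j
    using c that assms(3,4) by auto
  show ?thesis
    unfolding is_contiguous_allocation_def is_allocation_def
    by (intro conjI allI impI union) (rule subset disjoint interval; assumption)+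
qed

text \<open>The owner of the last item m - 1 has a bundle ending at m - 1, so it can absorb item m.\<close>

lemma contiguous_allocation_extend_last:
  assumes A: "is_contiguous_allocation n m A" and "0 < m"
  obtains i where "i < n" "A i \<noteq> {}" "is_contiguous_allocation n (Suc m) (A(i := insert m (A i)))"
proof -
  have "m - 1 \<in> (\<Union>j<n. A j)"
    using A \<open>0 < m\<close> unfolding is_contiguous_allocation_def is_allocation_def by auto
  then obtain i where i: "i < n" "m - 1 \<in> A i" by auto
  then obtain k l where kl: "k \<le> l" "A i = {k..l}"
    using contiguous_allocation_bundles(2)[OF A] by blast
  have "l < m" using contiguous_allocation_bundles(1)[OF A i(1)] kl by auto
  with i kl have "insert m (A i) = {k..m}" "k \<le> m" by auto
  with i that show ?thesis
    using contiguous_allocation_insert_next[OF A i(1)] by blast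
qed

lemma contiguous_allocation_open_bundle:
  assumes "is_contiguous_allocation n m A" "i < n" "A i = {}"
  shows "is_contiguous_allocation n (Suc m) (A(i := insert m (A i)))"
  using contiguous_allocation_insert_next[OF assms(1,2) order_refl] assms(3) by simp

lemma contiguous_allocation_welfare_ge_card_likers:
  assumes "\<forall>g<m. f g < n \<and> 1 \<le> v (f g) g"
  shows "\<exists>A. is_contiguous_allocation n m A \<and> (\<forall>i. A i \<noteq> {} \<longrightarrow> i \<in> f ` {..<m})
           \<and> card (f ` {..<m}) \<le> utilitarian_welfare n v A"
  using assms
proof (induction m)
  case 0
  show ?case
    by (rule exI[of _ "\<lambda>_. {}"]) (auto simp: is_contiguous_allocation_def is_allocation_def)
next
  case (Suc m)
  then obtain A where A: "is_contiguous_allocation n m A" "\<forall>i. A i \<noteq> {} \<longrightarrow> i \<in> f ` {..<m}"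
    "card (f ` {..<m}) \<le> utilitarian_welfare n v A" by auto
  have fm: "f m < n" "1 \<le> v (f m) m" using Suc.prems by auto
  have img: "f ` {..<Suc m} = insert (f m) (f ` {..<m})" by (auto simp: lessThan_Suc)
  have welfare: "utilitarian_welfare n v (A(i := insert m (A i))) = utilitarian_welfare n v A + v i m"
    if "i < n" for i
    using contiguous_allocation_bundles(1)[OF A(1) that]
    by (intro utilitarian_welfare_fun_upd_insert that) (auto intro: finite_subset)
  show ?case
  proof (cases "f m \<in> f ` {..<m}")
    case True
    then have "0 < m" by auto
    then obtain i where i: "i < n" "A i \<noteq> {}"
      and contiguous: "is_contiguous_allocation n (Suc m) (A(i := insert m (A i)))"
      by (rule contiguous_allocation_extend_last[OF A(1)])
    have "\<forall>j. (A(i := insert m (A i))) j \<noteq> {} \<longrightarrow> j \<in> f ` {..<Suc m}"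
      using A(2) i(2) img by auto
    moreover have "card (f ` {..<Suc m}) \<le> utilitarian_welfare n v (A(i := insert m (A i)))"
      using A(3) True img welfare[OF i(1)] by (simp add: insert_absorb)
    ultimately show ?thesis using contiguous by blast
  next
    case False
    then have "A (f m) = {}" using A(2) by auto
    then have "is_contiguous_allocation n (Suc m) (A(f m := insert m (A (f m))))"
      by (rule contiguous_allocation_open_bundle[OF A(1) fm(1)])
    moreover have "\<forall>j. (A(f m := insert m (A (f m)))) j \<noteq> {} \<longrightarrow> j \<in> f ` {..<Suc m}"
      using A(2) img by auto
    moreover have "card (f ` {..<Suc m}) \<le> utilitarian_welfare n v (A(f m := insert m (A (f m))))"
      using A(3) False img fm welfare[OF fm(1)] by simp
    ultimately show ?thesis by blast
  qed
qed

lemma utilitarian_welfare_le_max_contiguous_welfare: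
  assumes "is_contiguous_allocation n m A"
  shows "utilitarian_welfare n v A \<le> max_contiguous_welfare n m v"
proof -
  have "utilitarian_welfare n v B \<le> (\<Sum>i<n. bundle_value v i {..<m})"
    if "is_contiguous_allocation n m B" for B
    unfolding utilitarian_welfare_def
    using contiguous_allocation_bundles(1)[OF that] by (intro sum_mono bundle_value_mono) auto
  then have "finite {utilitarian_welfare n v A | A. is_contiguous_allocation n m A}"
    by (auto intro: finite_subset[of _ "{..(\<Sum>i<n. bundle_value v i {..<m})}"])
  then show ?thesis unfolding max_contiguous_welfare_def using assms by (auto intro: Max_ge)
qed

lemma contiguous_allocation_single_agent:
  assumes "i < n"
  shows "is_contiguous_allocation n m (\<lambda>j. if j = i then {..<m} else {})"
    and "utilitarian_welfare n v (\<lambda>j. if j = i then {..<m} else {}) = bundle_value v i {..<m}"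
proof -
  have "{..<m} = {} \<or> {..<m} = {0..m - 1}" by auto
  then show "is_contiguous_allocation n m (\<lambda>j. if j = i then {..<m} else {})"
    using assms unfolding is_contiguous_allocation_def is_allocation_def by auto
  show "utilitarian_welfare n v (\<lambda>j. if j = i then {..<m} else {}) = bundle_value v i {..<m}"
    unfolding utilitarian_welfare_def using assms
    by (subst sum.remove[of _ i]) (auto simp: bundle_value_def)
qed

lemma sqrt_le_of_le_mult:
  fixes a b k m :: nat
  assumes "m \<le> a * b" "a \<le> k" "b \<le> k"
  shows "sqrt (real m) \<le> real k"
proof -
  have "m \<le> k * k" using assms by (meson le_trans mult_le_mono)
  then have "real m \<le> (real k)\<^sup>2" by (simp add: power2_eq_square flip: of_nat_mult)
  then have "sqrt (real m) \<le> sqrt ((real k)\<^sup>2)" by (rule real_sqrt_le_mono)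
  then show ?thesis by simp
qed

theorem mainTheorem11:
  fixes n m :: nat and v :: "nat \<Rightarrow> nat \<Rightarrow> nat"
  assumes "\<forall>g<m. \<exists>i<n. v i g \<ge> 1"
  shows "sqrt (real m) \<le> real (max_contiguous_welfare n m v)"
proof (cases "m = 0")
  case False
  from assms obtain f where f: "\<forall>g<m. f g < n \<and> 1 \<le> v (f g) g" by metis
  obtain A where "is_contiguous_allocation n m A" "card (f ` {..<m}) \<le> utilitarian_welfare n v A"
    using contiguous_allocation_welfare_ge_card_likers[of m f n v] f by blast
  then have likers: "card (f ` {..<m}) \<le> max_contiguous_welfare n m v"
    using utilitarian_welfare_le_max_contiguous_welfare le_trans by blast
  obtain i where i: "i \<in> f ` {..<m}"
    and fiber: "m \<le> card (f -` {i} \<inter> {..<m}) * card (f ` {..<m})"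
    using pigeonhole_card[of f "{..<m}" "f ` {..<m}"] False by auto
  have "i < n" using i f by auto
  have "card (f -` {i} \<inter> {..<m}) \<le> bundle_value v i (f -` {i} \<inter> {..<m})"
    using f by (intro card_le_bundle_value) auto
  also have "\<dots> \<le> bundle_value v i {..<m}" by (intro bundle_value_mono) auto
  also have "\<dots> \<le> max_contiguous_welfare n m v"
    using contiguous_allocation_single_agent[OF \<open>i < n\<close>]
      utilitarian_welfare_le_max_contiguous_welfare by metis
  finally show ?thesis using sqrt_le_of_le_mult[OF fiber _ likers] by blast
qed simp

end
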